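(* Let $S=\{p_1,\dots,p_N\}\subset\mathbb{R}^n$, let $f:S\to\mathbb{R}^m$, and let $x\in\mathbb{R}^n\setminus S$. Suppose there exist $J\subset\{1,\dots,N\}$, a point $f_0$ in the convex hull of $\{f(p_j)\}_{j\in J}$, and $\lambda_0>0$ such that $\|f_0-f(p_j)\|=\lambda_0\|x-p_j\|$ for all $j\in J$ and $\|f_0-f(p_i)\|\le\lambda_0\|x-p_i\|$ for all $i\in\{1,\dots,N\}$. Then $\lambda_0=\lambda(f,S)(x)$ and $f_0=K(f,S)(x)$.
   Context: $\|\cdot\|$ is the Euclidean norm. $\lambda(f,S)(x):=\inf_{y\in\mathbb{R}^m}\sup_{i\in\{1,\dots,N\}}\|y-f(p_i)\|/\|x-p_i\|$. There is a unique $y\in\mathbb{R}^m$ attaining this infimum, and it is denoted $K(f,S)(x)$ (the Kirszbraun value of $f$ restricted to $S$ at $x$). *)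

theory Defs
  imports "HOL-Analysis.Analysis"
begin

definition kb_ratio :: "('a::euclidean_space \<Rightarrow> 'b::euclidean_space) \<Rightarrow> 'a set \<Rightarrow> 'a \<Rightarrow> 'b \<Rightarrow> real" where
  "kb_ratio f S x y = (SUP p\<in>S. norm (y - f p) / norm (x - p))"

definition kb_lambda :: "('a::euclidean_space \<Rightarrow> 'b::euclidean_space) \<Rightarrow> 'a set \<Rightarrow> 'a \<Rightarrow> real" where
  "kb_lambda f S x = (INF y. kb_ratio f S x y)"

definition kirszbraun :: "('a::euclidean_space \<Rightarrow> 'b::euclidean_space) \<Rightarrow> 'a set \<Rightarrow> 'a \<Rightarrow> 'b" where
  "kirszbraun f S x = (THE y. kb_ratio f S x y = kb_lambda f S x)"

end

theory Submission
  imports Defs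
begin

text \<open>
  Every candidate \<open>y \<noteq> f\<^sub>0\<close> moves away from some \<open>f(p\<^sub>j)\<close>, \<open>j \<in> J\<close>: since \<open>f\<^sub>0\<close> is a convex
  combination of these values, they cannot all lie strictly on the side of \<open>f\<^sub>0\<close> towards which
  \<open>y\<close> points. For such a \<open>j\<close> the angle at \<open>f\<^sub>0\<close> is not acute, so
  \<open>\<parallel>y - f(p\<^sub>j)\<parallel> > \<parallel>f\<^sub>0 - f(p\<^sub>j)\<parallel> = \<lambda>\<^sub>0\<parallel>x - p\<^sub>j\<parallel>\<close>. Hence the ratio function of \<open>y\<close> exceeds \<open>\<lambda>\<^sub>0\<close>,
  while that of \<open>f\<^sub>0\<close> equals \<open>\<lambda>\<^sub>0\<close>; so \<open>f\<^sub>0\<close> is the strict minimiser.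
\<close>

lemma convex_hull_obtuse_vertex:
  fixes y z :: "'b::real_inner"
  assumes "z \<in> convex hull T"
  obtains v where "v \<in> T" "inner (y - z) (z - v) \<ge> 0"
proof -
  have "\<exists>v\<in>T. inner (y - z) v \<le> inner (y - z) z"
  proof (rule ccontr)
    assume "\<not> ?thesis"
    then have "T \<subseteq> {w. inner (y - z) w > inner (y - z) z}" by auto
    then have "convex hull T \<subseteq> {w. inner (y - z) w > inner (y - z) z}"
      by (rule hull_minimal) (rule convex_halfspace_gt)
    with assms show False by auto
  qed
  then show thesis using that by (auto simp: inner_diff_right)
qed

lemma norm_diff_gt_of_inner_nonneg:
  fixes y z v :: "'b::real_inner"
  assumes "y \<noteq> z" "inner (y - z) (z - v) \<ge> 0"
  shows "norm (z - v) < norm (y - v)"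
proof -
  have "(norm (z - v))\<^sup>2 < (norm (y - z))\<^sup>2 + 2 * inner (y - z) (z - v) + (norm (z - v))\<^sup>2"
    using assms by (simp add: add_pos_nonneg)
  also have "\<dots> = (norm ((y - z) + (z - v)))\<^sup>2"
    unfolding power2_norm_eq_inner by (simp only: inner_add_left inner_add_right inner_commute)
  finally show ?thesis by (simp add: power_less_imp_less_base)
qed

lemma kb_ratio_ge:
  assumes "finite S" "p \<in> S"
  shows "norm (y - f p) / norm (x - p) \<le> kb_ratio f S x y"
  unfolding kb_ratio_def using assms by (intro cSUP_upper) auto

lemma kb_ratio_le:
  assumes "S \<noteq> {}" "\<And>p. p \<in> S \<Longrightarrow> norm (y - f p) / norm (x - p) \<le> c"
  shows "kb_ratio f S x y \<le> c"
  unfolding kb_ratio_def using assms by (rule cSUP_least)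

lemma kb_lambda_kirszbraun_strict_min:
  assumes "\<And>y. y \<noteq> y0 \<Longrightarrow> kb_ratio f S x y0 < kb_ratio f S x y"
  shows "kb_lambda f S x = kb_ratio f S x y0 \<and> kirszbraun f S x = y0"
proof -
  have ge: "kb_ratio f S x y0 \<le> kb_ratio f S x y" for y
    using assms[of y] by (cases "y = y0") auto
  have lam: "kb_lambda f S x = kb_ratio f S x y0"
    unfolding kb_lambda_def
  proof (rule antisym)
    show "(INF y. kb_ratio f S x y) \<le> kb_ratio f S x y0"
      by (rule cINF_lower) (auto intro: bdd_belowI2 ge)
    show "kb_ratio f S x y0 \<le> (INF y. kb_ratio f S x y)"
      by (rule cINF_greatest) (auto intro: ge)
  qed
  have "kirszbraun f S x = y0"
    unfolding kirszbraun_def lam by (rule the_equality) (use assms in force)+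
  with lam show ?thesis by simp
qed

theorem mainTheorem6:
  fixes S :: "'a::euclidean_space set" and f :: "'a \<Rightarrow> 'b::euclidean_space"
    and x :: 'a and J :: "'a set" and f0 :: 'b and lam0 :: real
  assumes "finite S"
    and "x \<notin> S"
    and "J \<subseteq> S"
    and "f0 \<in> convex hull (f ` J)"
    and "lam0 > 0"
    and "\<forall>p\<in>J. norm (f0 - f p) = lam0 * norm (x - p)"
    and "\<forall>p\<in>S. norm (f0 - f p) \<le> lam0 * norm (x - p)"
  shows "lam0 = kb_lambda f S x \<and> f0 = kirszbraun f S x"
proof -
  have dist_pos: "norm (x - p) > 0" if "p \<in> S" for p
    using that assms(2) by auto
  have tight: "norm (y - f p) / norm (x - p) \<le> kb_ratio f S x y"
    "lam0 < norm (y - f p) / norm (x - p) \<longleftrightarrow> lam0 * norm (x - p) < norm (y - f p)"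
    if "p \<in> J" for p y
    using that assms(1,3) dist_pos
    by (auto intro: kb_ratio_ge simp: pos_less_divide_eq mult.commute)
  obtain p where "p \<in> J"
    using assms(4) by (metis convex_hull_empty empty_iff equals0I image_empty)
  then have "lam0 \<le> kb_ratio f S x f0"
    using tight(1)[of p f0] assms(3,6) dist_pos by auto
  moreover have "kb_ratio f S x f0 \<le> lam0"
    using assms(3,7) \<open>p \<in> J\<close> dist_pos
    by (intro kb_ratio_le) (auto simp: pos_divide_le_eq mult.commute)
  ultimately have ratio_f0: "kb_ratio f S x f0 = lam0" by simp
  have "lam0 < kb_ratio f S x y" if "y \<noteq> f0" for y
  proof -
    obtain v where "v \<in> f ` J" "inner (y - f0) (f0 - v) \<ge> 0"
      using convex_hull_obtuse_vertex[OF assms(4)] .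
    then obtain q where "q \<in> J" "norm (f0 - f q) < norm (y - f q)"
      using norm_diff_gt_of_inner_nonneg[OF \<open>y \<noteq> f0\<close>] by blast
    then show ?thesis
      using tight[of q y] assms(6) by fastforce
  qed
  then show ?thesis
    using kb_lambda_kirszbraun_strict_min[of f0 f S x] ratio_f0 by auto
qed

end
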